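(* Let $\mathcal{D}$ be a distribution supported on $(0,1]$ with mean $\mu$. Fix $n,m$, a preference profile $\sigma$, and $\epsilon,\delta>0$, and let $T=\frac{2\log(2m/\delta)}{\mu^2\epsilon^2}$. Draw $T$ independent batches of $nm$ i.i.d. samples from $\mathcal{D}$. In batch $t$, give each voter $i$ her own $m$ samples, and let $Y^{i,t}_r$ denote the $r$-th largest of them. For each alternative $j$, letting $r^j_i$ be the position of $j$ in voter $i$'s ranking, define $$\hat\mu_j=\frac1T\sum_{t=1}^T\frac{\sum_{i=1}^n Y^{i,t}_{r^j_i}}{\max_{k\in A}\sum_{i=1}^n Y^{i,t}_{r^k_i}},$$ and let $j_{\mathrm{samp}}\in\arg\max_j\hat\mu_j$. Then with probability at least $1-\delta$ (over the samples), $$\mathbb{E}[\mathrm{dist}(j_{\mathrm{samp}},\sigma)]\ge(1-\epsilon)\max_{j\in A}\mathbb{E}[\mathrm{dist}(j,\sigma)].$$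
   Context: There are $n$ voters and $m$ alternatives $A=\{1,\dots,m\}$. A preference profile $\sigma$ consists of a ranking of $A$ for each voter; position $1$ is the top. Given $\mathcal{D}$ and $\sigma$, a random utility profile $u$ consistent with $\sigma$ is generated as follows: independently for each voter $i$, draw $m$ i.i.d. samples from $\mathcal{D}$ and assign them, from highest to lowest, to the alternatives in the order of voter $i$'s ranking. The social welfare of $j$ is $\mathrm{sw}(j,u)=\sum_i u_{ij}$, and the distortion of $j$ at $\sigma$ is the random variable $\mathrm{dist}(j,\sigma)=\mathrm{sw}(j,u)/\max_{k\in A}\mathrm{sw}(k,u)$; $\mathbb{E}[\mathrm{dist}(j,\sigma)]$ is the expectation over a fresh such $u$ (for fixed $j_{\mathrm{samp}}$). *)

theory Defs
  imports "HOL-Probability.Probability"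
begin

text \<open>Voters are 0..n-1, alternatives 0..m-1. A preference profile is given by
  positions: sigma i j is the (0-based) position of alternative j in voter i's
  ranking (position 0 = top).\<close>

definition is_profile :: "nat \<Rightarrow> nat \<Rightarrow> (nat \<Rightarrow> nat \<Rightarrow> nat) \<Rightarrow> bool" where
  "is_profile n m \<sigma> \<longleftrightarrow> (\<forall>i<n. bij_betw (\<sigma> i) {..<m} {..<m})"

definition kth_largest :: "nat \<Rightarrow> (nat \<Rightarrow> real) \<Rightarrow> nat \<Rightarrow> real" where
  "kth_largest m v r = rev (sort (map v [0..<m])) ! r"

text \<open>A batch of samples s (i,k), i<n, k<m; voter i's own samples are s (i,k), k<m.
  The induced utility of voter i for alternative j is the sample of rank sigma i j.\<close>
definition util :: "nat \<Rightarrow> (nat \<Rightarrow> nat \<Rightarrow> nat) \<Rightarrow> (nat \<times> nat \<Rightarrow> real) \<Rightarrow> nat \<Rightarrow> nat \<Rightarrow> real" where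
  "util m \<sigma> s i j = kth_largest m (\<lambda>k. s (i, k)) (\<sigma> i j)"

definition sw :: "nat \<Rightarrow> nat \<Rightarrow> (nat \<Rightarrow> nat \<Rightarrow> nat) \<Rightarrow> nat \<Rightarrow> (nat \<times> nat \<Rightarrow> real) \<Rightarrow> real" where
  "sw n m \<sigma> j s = (\<Sum>i<n. util m \<sigma> s i j)"

definition distortion :: "nat \<Rightarrow> nat \<Rightarrow> (nat \<Rightarrow> nat \<Rightarrow> nat) \<Rightarrow> nat \<Rightarrow> (nat \<times> nat \<Rightarrow> real) \<Rightarrow> real" where
  "distortion n m \<sigma> j s = sw n m \<sigma> j s / Max ((\<lambda>k. sw n m \<sigma> k s) ` {..<m})"

definition batch_measure :: "real measure \<Rightarrow> nat \<Rightarrow> nat \<Rightarrow> (nat \<times> nat \<Rightarrow> real) measure" where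
  "batch_measure D n m = PiM ({..<n} \<times> {..<m}) (\<lambda>_. D)"

definition expected_dist :: "real measure \<Rightarrow> nat \<Rightarrow> nat \<Rightarrow> (nat \<Rightarrow> nat \<Rightarrow> nat) \<Rightarrow> nat \<Rightarrow> real" where
  "expected_dist D n m \<sigma> j = (\<integral>s. distortion n m \<sigma> j s \<partial>batch_measure D n m)"

definition sample_measure :: "real measure \<Rightarrow> nat \<Rightarrow> nat \<Rightarrow> nat \<Rightarrow> (nat \<Rightarrow> nat \<times> nat \<Rightarrow> real) measure" where
  "sample_measure D n m T = PiM {..<T} (\<lambda>_. batch_measure D n m)"

definition mu_hat :: "nat \<Rightarrow> nat \<Rightarrow> (nat \<Rightarrow> nat \<Rightarrow> nat) \<Rightarrow> nat \<Rightarrow> nat \<Rightarrow> (nat \<Rightarrow> nat \<times> nat \<Rightarrow> real) \<Rightarrow> real" where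
  "mu_hat n m \<sigma> T j \<omega> = (1 / real T) * (\<Sum>t<T. distortion n m \<sigma> j (\<omega> t))"

end

(*
  Each distortion dist(j, sigma) takes values in [0, 1], so by Hoeffding's inequality and a union
  bound over the m alternatives, with probability at least 1 - 2 m exp (- T mu^2 eps^2 / 2) >= 1 - delta
  every empirical mean mu_hat j is within mu eps / 2 of E[dist(j, sigma)]; on this event the
  empirical maximiser j_samp loses at most mu eps against the best alternative. It remains to see
  mu <= max_j E[dist(j, sigma)]: every social welfare is at most n, so the distortions of all
  alternatives sum to at least (total of all n m samples) / n, whose expectation is m mu.
*)

theory Submission
  imports Defs
begin

lemma map_insort_key: "map f (insort_key f x ys) = insort (f x) (map f ys)"
  by (induction ys) auto

lemma map_sort_key: "map f (sort_key f xs) = sort (map f xs)"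
  by (induction xs) (simp_all add: map_insort_key)

lemma kth_largest_eq_sort_key:
  assumes "r < m"
  shows "kth_largest m v r = v (rev (sort_key v [0..<m]) ! r)"
  using assms by (simp add: kth_largest_def map_sort_key[symmetric] rev_map)

lemma kth_largest_in_image:
  assumes "r < m"
  shows "kth_largest m v r \<in> v ` {..<m}"
proof -
  have "rev (sort_key v [0..<m]) ! r \<in> {..<m}"
    using nth_mem[of r "rev (sort_key v [0..<m])"] assms by simp
  then show ?thesis
    unfolding kth_largest_eq_sort_key[OF assms] by (rule imageI)
qed

lemma sum_kth_largest: "(\<Sum>r<m. kth_largest m v r) = (\<Sum>k<m. v k)"
proof -
  let ?L = "rev (sort (map v [0..<m]))"
  have "(\<Sum>r<m. kth_largest m v r) = sum_list ?L"
    by (simp add: kth_largest_def sum_list_sum_nth atLeast0LessThan)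
  also have "\<dots> = sum_list (map v [0..<m])"
    by (metis mset_rev mset_sort sum_mset_sum_list)
  also have "\<dots> = (\<Sum>k<m. v k)"
    by (simp add: sum_list_sum_nth atLeast0LessThan)
  finally show ?thesis .
qed

lemma kth_largest_cong:
  assumes "\<And>k. k < m \<Longrightarrow> v k = w k"
  shows "kth_largest m v r = kth_largest m w r"
proof -
  have "map v [0..<m] = map w [0..<m]"
    using assms by (intro map_cong) auto
  then show ?thesis
    unfolding kth_largest_def by (rule arg_cong)
qed

lemma measurable_insort_key:
  fixes f :: "'i \<Rightarrow> 'a \<Rightarrow> real"
  assumes "\<And>k. f k \<in> borel_measurable M"
  shows "(\<lambda>x. insort_key (\<lambda>k. f k x) a p) \<in> measurable M (count_space UNIV)"
proof (induction p)
  case (Cons b p)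
  have "(\<lambda>x. b # insort_key (\<lambda>k. f k x) a p) \<in> measurable M (count_space UNIV)"
    using measurable_compose[OF Cons.IH, of "(#) b"] by simp
  then show ?case using assms by simp
qed simp

lemma measurable_sort_key:
  fixes f :: "'i::countable \<Rightarrow> 'a \<Rightarrow> real"
  assumes "\<And>k. f k \<in> borel_measurable M"
  shows "(\<lambda>x. sort_key (\<lambda>k. f k x) xs) \<in> measurable M (count_space UNIV)"
proof (induction xs)
  case (Cons a xs)
  show ?case
    using measurable_compose_countable'[where f="\<lambda>p x. insort_key (\<lambda>k. f k x) a p",
        OF measurable_insort_key[OF assms] Cons.IH] by simp
qed simp

(* The r-th largest value is f evaluated at an index read off the sorting permutation, which
   ranges over the countable type of index lists. *)
lemma borel_measurable_kth_largest:
  assumes f: "\<And>k. k < m \<Longrightarrow> f k \<in> borel_measurable M" and "r < m"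
  shows "(\<lambda>x. kth_largest m (\<lambda>k. f k x) r) \<in> borel_measurable M"
proof -
  define g where "g k = (if k < m then f k else (\<lambda>_. 0))" for k
  have g: "g k \<in> borel_measurable M" for k
    using f by (simp add: g_def)
  have "(\<lambda>x. g (rev (sort_key (\<lambda>k. g k x) [0..<m]) ! r) x) \<in> borel_measurable M"
    by (rule measurable_compose_countable'[OF g measurable_sort_key[OF g]]) simp
  moreover have "kth_largest m (\<lambda>k. f k x) r = g (rev (sort_key (\<lambda>k. g k x) [0..<m]) ! r) x" for x
  proof -
    have "kth_largest m (\<lambda>k. f k x) r = kth_largest m (\<lambda>k. g k x) r"
      by (rule kth_largest_cong) (simp add: g_def)
    then show ?thesis
      using \<open>r < m\<close> by (simp only: kth_largest_eq_sort_key)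
  qed
  ultimately show ?thesis
    by simp
qed

lemma indep_vars_PiM_components:
  assumes "\<And>i. i \<in> I \<Longrightarrow> prob_space (M i)" "I \<noteq> {}"
  shows "prob_space.indep_vars (PiM I M) M (\<lambda>i \<omega>. \<omega> i) I"
proof -
  interpret P: prob_space "PiM I M"
    using assms(1) by (rule prob_space_PiM)
  have "distr (PiM I M) (PiM I M) (\<lambda>\<omega>. \<lambda>i\<in>I. \<omega> i) = distr (PiM I M) (PiM I M) (\<lambda>\<omega>. \<omega>)"
    by (rule distr_cong) (auto simp: space_PiM PiE_def extensional_restrict)
  also have "\<dots> = PiM I M"
    by (rule distr_id)
  also have "\<dots> = (\<Pi>\<^sub>M i\<in>I. distr (PiM I M) (M i) (\<lambda>\<omega>. \<omega> i))"
    by (rule PiM_cong) (auto simp: distr_PiM_component assms)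
  finally show ?thesis
    using assms(2) by (subst P.indep_vars_iff_distr_eq_PiM') auto
qed

lemma hoeffding_PiM_sample_mean:
  fixes f :: "'a \<Rightarrow> real" and T :: nat and e :: real
  assumes B: "prob_space B" and f: "f \<in> borel_measurable B"
    and f_in_unit: "AE x in B. f x \<in> {0..1}" and "0 < T" "0 \<le> e"
  shows "measure (PiM {..<T} (\<lambda>_. B))
           {\<omega> \<in> space (PiM {..<T} (\<lambda>_. B)). e \<le> \<bar>(\<Sum>t<T. f (\<omega> t)) / T - (\<integral>x. f x \<partial>B)\<bar>}
         \<le> 2 * exp (- 2 * real T * e\<^sup>2)"
proof -
  let ?S = "PiM {..<T} (\<lambda>_. B)"
  interpret S: prob_space ?S
    using B by (intro prob_space_PiM)
  have component: "(\<lambda>\<omega>. \<omega> t) \<in> measurable ?S B" if "t < T" for t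
    using that by (intro measurable_component_singleton) auto
  have distr_component: "distr ?S B (\<lambda>\<omega>. \<omega> t) = B" if "t < T" for t
    using B that by (intro distr_PiM_component) auto
  have distr_f: "distr ?S borel (\<lambda>\<omega>. f (\<omega> t)) = distr B borel f" if "t < T" for t
    using distr_distr[OF f component[OF that]] by (simp add: comp_def distr_component[OF that])
  have "S.indep_vars (\<lambda>_. B) (\<lambda>t \<omega>. \<omega> t) {..<T}"
    using B \<open>0 < T\<close> by (intro indep_vars_PiM_components) auto
  then have indep: "S.indep_vars (\<lambda>_. borel) (\<lambda>t \<omega>. f (\<omega> t)) {..<T}"
    using f by (rule S.indep_vars_compose2)
  \<comment> \<open>coordinate 0 serves as the reference copy of the identically distributed family\<close>
  interpret H: Hoeffding_ineq_iid ?S "{..<T}" "\<lambda>t \<omega>. f (\<omega> t)" "\<lambda>\<omega>. f (\<omega> 0)" 0 1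
    "S.expectation (\<lambda>\<omega>. f (\<omega> 0))"
  proof unfold_locales
    show "(\<lambda>\<omega>. f (\<omega> 0)) \<in> borel_measurable ?S"
      using measurable_compose[OF component f] \<open>0 < T\<close> by simp
    show "AE \<omega> in ?S. f (\<omega> 0) \<in> {0..1}"
      using B f_in_unit \<open>0 < T\<close> by (intro AE_PiM_component[where M="\<lambda>_. B"]) auto
    show "distr ?S borel (\<lambda>\<omega>. f (\<omega> t)) = distr ?S borel (\<lambda>\<omega>. f (\<omega> 0))" if "t \<in> {..<T}" for t
      using distr_f[of t] distr_f[of 0] that \<open>0 < T\<close> by simp
    show "finite {..<T}"
      by simp
    show "S.indep_vars (\<lambda>_. borel) (\<lambda>t \<omega>. f (\<omega> t)) {..<T}"
      by (rule indep)
  qed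
  have mean: "S.expectation (\<lambda>\<omega>. f (\<omega> 0)) = (\<integral>x. f x \<partial>B)"
    using integral_distr[OF component[OF \<open>0 < T\<close>] f] by (simp add: distr_component[OF \<open>0 < T\<close>])
  have "{..<T} \<noteq> {}"
    using \<open>0 < T\<close> by auto
  from H.Hoeffding_ineq_abs_ge'[OF \<open>0 \<le> e\<close> zero_less_one this] show ?thesis
    unfolding mean by simp
qed

lemma hoeffding_PiM_uniform:
  fixes f :: "'j \<Rightarrow> 'a \<Rightarrow> real" and T :: nat and e :: real
  assumes B: "prob_space B" and "finite J"
    and f: "\<And>j. j \<in> J \<Longrightarrow> f j \<in> borel_measurable B"
    and f_in_unit: "\<And>j. j \<in> J \<Longrightarrow> AE x in B. f j x \<in> {0..1}" and "0 < T" "0 \<le> e"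
  shows "1 - 2 * card J * exp (- 2 * real T * e\<^sup>2) \<le> measure (PiM {..<T} (\<lambda>_. B))
           {\<omega> \<in> space (PiM {..<T} (\<lambda>_. B)). \<forall>j\<in>J. \<bar>(\<Sum>t<T. f j (\<omega> t)) / T - (\<integral>x. f j x \<partial>B)\<bar> < e}"
proof -
  let ?S = "PiM {..<T} (\<lambda>_. B)"
  interpret S: prob_space ?S
    using B by (intro prob_space_PiM)
  define bad where
    "bad j = {\<omega> \<in> space ?S. e \<le> \<bar>(\<Sum>t<T. f j (\<omega> t)) / T - (\<integral>x. f j x \<partial>B)\<bar>}" for j
  have bad_sets: "bad j \<in> sets ?S" if "j \<in> J" for j
  proof -
    have [measurable]: "f j \<in> borel_measurable B"
      using f[OF that] .
    show ?thesis
      unfolding bad_def by measurable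
  qed
  have "measure ?S (\<Union>j\<in>J. bad j) \<le> (\<Sum>j\<in>J. measure ?S (bad j))"
    using bad_sets by (intro S.finite_measure_subadditive_finite \<open>finite J\<close>) auto
  also have "\<dots> \<le> (\<Sum>j\<in>J. 2 * exp (- 2 * real T * e\<^sup>2))"
    unfolding bad_def using assms by (intro sum_mono hoeffding_PiM_sample_mean) auto
  finally have "1 - 2 * card J * exp (- 2 * real T * e\<^sup>2) \<le> measure ?S (space ?S - (\<Union>j\<in>J. bad j))"
    using bad_sets by (subst S.prob_compl) (auto intro: sets.finite_UN[OF \<open>finite J\<close>])
  also have "space ?S - (\<Union>j\<in>J. bad j) =
      {\<omega> \<in> space ?S. \<forall>j\<in>J. \<bar>(\<Sum>t<T. f j (\<omega> t)) / T - (\<integral>x. f j x \<partial>B)\<bar> < e}"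
    unfolding bad_def by auto
  finally show ?thesis .
qed

lemma maximizer_of_estimates_nearly_optimal:
  fixes g c :: "'j \<Rightarrow> real"
  assumes "finite J" "j \<in> J" "\<forall>k\<in>J. g k \<le> g j" "\<forall>k\<in>J. \<bar>g k - c k\<bar> < e"
  shows "Max (c ` J) - 2 * e < c j"
proof -
  have "Max (c ` J) \<in> c ` J"
    using assms(1,2) by (intro Max_in) auto
  then obtain k where "k \<in> J" "c k = Max (c ` J)"
    by auto
  moreover have "g k \<le> g j" "\<bar>g k - c k\<bar> < e" "\<bar>g j - c j\<bar> < e"
    using assms(2-4) \<open>k \<in> J\<close> by auto
  ultimately show ?thesis
    by (simp add: abs_less_iff)
qed

lemma sets_Collect_maximizer_imp:
  fixes g :: "nat \<Rightarrow> 'a \<Rightarrow> real"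
  assumes "\<And>k. k < m \<Longrightarrow> g k \<in> borel_measurable M"
  shows "{\<omega> \<in> space M. \<forall>j<m. (\<forall>k<m. g k \<omega> \<le> g j \<omega>) \<longrightarrow> P j} \<in> sets M"
proof -
  have "{\<omega> \<in> space M. \<forall>j<m. (\<forall>k<m. g k \<omega> \<le> g j \<omega>) \<longrightarrow> P j} =
      {\<omega> \<in> space M. \<forall>j\<in>{..<m}. (\<forall>k\<in>{..<m}. g k \<omega> \<le> g j \<omega>) \<longrightarrow> P j}"
    by auto
  also have "\<dots> \<in> sets M"
  proof (intro sets.sets_Collect_finite_All sets.sets_Collect_imp sets.sets_Collect_const finite_lessThan)
    fix j k assume "j \<in> {..<m}" "k \<in> {..<m}"
    then have [measurable]: "g j \<in> borel_measurable M" "g k \<in> borel_measurable M"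
      using assms by auto
    show "{\<omega> \<in> space M. g k \<omega> \<le> g j \<omega>} \<in> sets M"
      by measurable
  qed
  finally show ?thesis .
qed

lemma sample_size_bound:
  fixes m T :: nat and c \<delta> :: real
  assumes "0 < c" "0 < \<delta>" "\<delta> < 1" "0 < m" "T = nat \<lceil>2 * ln (2 * real m / \<delta>) / c\<rceil>"
  shows "0 < T" and "2 * real m * exp (- real T * c / 2) \<le> \<delta>"
proof -
  have ln_pos: "0 < ln (2 * real m / \<delta>)"
    using assms(2-4) by (intro ln_gt_zero) (simp add: field_simps)
  have T_ge: "2 * ln (2 * real m / \<delta>) / c \<le> real T"
    unfolding assms(5) by (rule real_nat_ceiling_ge)
  moreover have "0 < 2 * ln (2 * real m / \<delta>) / c"
    using ln_pos assms(1) by simp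
  ultimately show "0 < T"
    by linarith
  have "ln (2 * real m / \<delta>) \<le> real T * c / 2"
    using T_ge assms(1) by (simp add: pos_divide_le_eq mult_ac)
  then have "exp (- real T * c / 2) \<le> exp (- ln (2 * real m / \<delta>))"
    by simp
  also have "\<dots> = \<delta> / (2 * real m)"
    using assms(2,4) by (simp add: exp_minus)
  finally show "2 * real m * exp (- real T * c / 2) \<le> \<delta>"
    using assms(4) by (simp add: field_simps)
qed

(* Nonnegativity and the bound 1 are all the welfare estimates need, so zero samples are allowed. *)
definition samples_in_unit :: "nat \<Rightarrow> nat \<Rightarrow> (nat \<times> nat \<Rightarrow> real) \<Rightarrow> bool" where
  "samples_in_unit n m s \<longleftrightarrow> (\<forall>i<n. \<forall>k<m. s (i, k) \<in> {0..1})"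

lemma profile_less:
  assumes "is_profile n m \<sigma>" "i < n" "j < m"
  shows "\<sigma> i j < m"
  using assms unfolding is_profile_def bij_betw_def by auto

lemma sum_sw_eq_sum_samples:
  assumes "is_profile n m \<sigma>"
  shows "(\<Sum>j<m. sw n m \<sigma> j s) = (\<Sum>i<n. \<Sum>k<m. s (i, k))"
proof -
  have "(\<Sum>j<m. sw n m \<sigma> j s) = (\<Sum>i<n. \<Sum>j<m. kth_largest m (\<lambda>k. s (i, k)) (\<sigma> i j))"
    unfolding sw_def util_def by (rule sum.swap)
  also have "\<dots> = (\<Sum>i<n. \<Sum>r<m. kth_largest m (\<lambda>k. s (i, k)) r)"
    using assms unfolding is_profile_def by (intro sum.cong refl sum.reindex_bij_betw) auto
  also have "\<dots> = (\<Sum>i<n. \<Sum>k<m. s (i, k))"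
    by (simp add: sum_kth_largest)
  finally show ?thesis .
qed

lemma util_in_unit:
  assumes "samples_in_unit n m s" "is_profile n m \<sigma>" "i < n" "j < m"
  shows "util m \<sigma> s i j \<in> {0..1}"
proof -
  have "util m \<sigma> s i j \<in> (\<lambda>k. s (i, k)) ` {..<m}"
    unfolding util_def using profile_less[OF assms(2-4)] by (rule kth_largest_in_image)
  then show ?thesis
    using assms(1,3) unfolding samples_in_unit_def by auto
qed

lemma sw_bounds:
  assumes "samples_in_unit n m s" "is_profile n m \<sigma>" "j < m"
  shows "0 \<le> sw n m \<sigma> j s" and "sw n m \<sigma> j s \<le> n"
proof -
  have "util m \<sigma> s i j \<in> {0..1}" if "i < n" for i
    using util_in_unit[OF assms(1,2) that assms(3)] .
  then show "0 \<le> sw n m \<sigma> j s" and "sw n m \<sigma> j s \<le> n"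
    unfolding sw_def using sum_mono[of "{..<n}" "\<lambda>i. util m \<sigma> s i j" "\<lambda>_. 1"]
    by (auto intro: sum_nonneg)
qed

lemma distortion_bounds:
  assumes "samples_in_unit n m s" "is_profile n m \<sigma>" "j < m"
  shows "distortion n m \<sigma> j s \<in> {0..1}" and "sw n m \<sigma> j s / n \<le> distortion n m \<sigma> j s"
proof -
  let ?M = "Max ((\<lambda>k. sw n m \<sigma> k s) ` {..<m})"
  have sw_le_M: "sw n m \<sigma> j s \<le> ?M"
    using assms(3) by (intro Max_ge) auto
  have M_le_n: "?M \<le> n"
    using assms(3) sw_bounds(2)[OF assms(1,2)] by (subst Max_le_iff) auto
  have sw_nonneg: "0 \<le> sw n m \<sigma> j s"
    by (rule sw_bounds(1)[OF assms])
  \<comment> \<open>if all welfares vanish, every distortion is 0 / 0 = 0\<close>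
  show "distortion n m \<sigma> j s \<in> {0..1}"
    unfolding distortion_def using sw_le_M sw_nonneg
    by (cases "?M = 0") (auto simp: divide_le_eq_1)
  show "sw n m \<sigma> j s / n \<le> distortion n m \<sigma> j s"
    unfolding distortion_def using sw_le_M sw_nonneg M_le_n
    by (cases "?M = 0") (auto intro: divide_left_mono)
qed

lemma sum_samples_le_sum_distortion:
  assumes "samples_in_unit n m s" "is_profile n m \<sigma>"
  shows "(\<Sum>i<n. \<Sum>k<m. s (i, k)) / n \<le> (\<Sum>j<m. distortion n m \<sigma> j s)"
proof -
  have "(\<Sum>i<n. \<Sum>k<m. s (i, k)) / n = (\<Sum>j<m. sw n m \<sigma> j s / n)"
    by (simp only: sum_divide_distrib[symmetric] sum_sw_eq_sum_samples[OF assms(2)])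
  also have "\<dots> \<le> (\<Sum>j<m. distortion n m \<sigma> j s)"
    using distortion_bounds(2)[OF assms] by (intro sum_mono) auto
  finally show ?thesis .
qed

locale sampling_model =
  fixes D :: "real measure" and n m :: nat and \<sigma> :: "nat \<Rightarrow> nat \<Rightarrow> nat"
  assumes prob_space_D: "prob_space D"
    and sets_D: "sets D = sets borel"
    and AE_D_in_unit: "AE x in D. 0 < x \<and> x \<le> 1"
    and profile: "is_profile n m \<sigma>"
    and n_pos: "0 < n" and m_pos: "0 < m"
begin

sublocale D: prob_space D
  by (rule prob_space_D)

sublocale B: prob_space "batch_measure D n m"
  unfolding batch_measure_def by (intro prob_space_PiM prob_space_D)

lemma measurable_sample:
  assumes "i < n" "k < m"
  shows "(\<lambda>s. s (i, k)) \<in> measurable (batch_measure D n m) D"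
  unfolding batch_measure_def using assms by (intro measurable_component_singleton) auto

lemma borel_measurable_sample:
  assumes "i < n" "k < m"
  shows "(\<lambda>s. s (i, k)) \<in> borel_measurable (batch_measure D n m)"
  using measurable_sample[OF assms] measurable_cong_sets[OF refl sets_D] by blast

lemma distr_sample:
  assumes "i < n" "k < m"
  shows "distr (batch_measure D n m) D (\<lambda>s. s (i, k)) = D"
  unfolding batch_measure_def using assms by (intro distr_PiM_component prob_space_D) auto

lemma AE_samples_in_unit: "AE s in batch_measure D n m. samples_in_unit n m s"
proof -
  have "AE s in batch_measure D n m. \<forall>p\<in>{..<n} \<times> {..<m}. s p \<in> {0..1}"
  proof (rule AE_finite_allI)
    fix p assume "p \<in> {..<n} \<times> {..<m}"
    then show "AE s in batch_measure D n m. s p \<in> {0..1}"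
      unfolding batch_measure_def using AE_D_in_unit prob_space_D
      by (intro AE_PiM_component) (auto elim: eventually_mono)
  qed simp
  then show ?thesis
    unfolding samples_in_unit_def by (rule eventually_mono) auto
qed

lemma borel_measurable_distortion:
  assumes "j < m"
  shows "distortion n m \<sigma> j \<in> borel_measurable (batch_measure D n m)"
proof -
  have util: "(\<lambda>s. util m \<sigma> s i k) \<in> borel_measurable (batch_measure D n m)" if "i < n" "k < m" for i k
    unfolding util_def using borel_measurable_sample[OF that(1)] profile_less[OF profile that]
    by (rule borel_measurable_kth_largest)
  have sw: "(\<lambda>s. sw n m \<sigma> k s) \<in> borel_measurable (batch_measure D n m)" if "k < m" for k
    unfolding sw_def using util that by (intro borel_measurable_sum) auto
  show ?thesis
    unfolding distortion_def[abs_def] using sw assms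
    by (intro borel_measurable_divide borel_measurable_Max) auto
qed

lemma AE_distortion_in_unit:
  assumes "j < m"
  shows "AE s in batch_measure D n m. distortion n m \<sigma> j s \<in> {0..1}"
  using AE_samples_in_unit by (rule eventually_mono) (rule distortion_bounds(1)[OF _ profile assms])

lemma integrable_distortion:
  assumes "j < m"
  shows "integrable (batch_measure D n m) (distortion n m \<sigma> j)"
  using AE_distortion_in_unit[OF assms] borel_measurable_distortion[OF assms]
  by (intro B.integrable_const_bound[where B=1]) (auto elim: eventually_mono)

lemma integrable_D: "integrable D (\<lambda>x. x)"
  using AE_D_in_unit measurable_ident_sets[OF sets_D]
  by (intro D.integrable_const_bound[where B=1]) (auto elim: eventually_mono)

lemma mean_pos: "0 < (\<integral>x. x \<partial>D)"
proof -
  have AE_nonneg: "AE x in D. 0 \<le> x"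
    using AE_D_in_unit by (auto elim: eventually_mono)
  have "(\<integral>x. x \<partial>D) \<noteq> 0"
  proof
    assume "(\<integral>x. x \<partial>D) = 0"
    then have "AE x in D. x = 0"
      using integral_nonneg_eq_0_iff_AE[OF integrable_D AE_nonneg] by simp
    with AE_D_in_unit have "AE x in D. False"
      by eventually_elim auto
    then show False
      by simp
  qed
  moreover have "0 \<le> (\<integral>x. x \<partial>D)"
    using AE_nonneg by (rule integral_nonneg_AE)
  ultimately show ?thesis
    by simp
qed

lemma integrable_sample:
  assumes "i < n" "k < m"
  shows "integrable (batch_measure D n m) (\<lambda>s. s (i, k))"
  using integrable_D integrable_distr_eq[OF measurable_sample[OF assms] measurable_ident_sets[OF sets_D]]
  by (simp add: distr_sample[OF assms])

lemma integral_sample: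
  assumes "i < n" "k < m"
  shows "(\<integral>s. s (i, k) \<partial>batch_measure D n m) = (\<integral>x. x \<partial>D)"
  using integral_distr[OF measurable_sample[OF assms] measurable_ident_sets[OF sets_D]]
  by (simp add: distr_sample[OF assms])

lemma borel_measurable_mu_hat:
  assumes "k < m"
  shows "mu_hat n m \<sigma> T k \<in> borel_measurable (sample_measure D n m T)"
proof -
  have [measurable]: "distortion n m \<sigma> k \<in> borel_measurable (batch_measure D n m)"
    using assms by (rule borel_measurable_distortion)
  show ?thesis
    unfolding mu_hat_def[abs_def] sample_measure_def by measurable
qed

lemma mean_le_Max_expected_dist: "(\<integral>x. x \<partial>D) \<le> Max (expected_dist D n m \<sigma> ` {..<m})"
proof -
  let ?B = "batch_measure D n m"
  have "real n * real m * (\<integral>x. x \<partial>D) = (\<Sum>i<n. \<Sum>k<m. \<integral>s. s (i, k) \<partial>?B)"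
    by (simp add: integral_sample)
  also have "\<dots> = (\<integral>s. (\<Sum>i<n. \<Sum>k<m. s (i, k)) \<partial>?B)"
    using integrable_sample
    by (subst Bochner_Integration.integral_sum) (auto simp: Bochner_Integration.integral_sum)
  finally have "real m * (\<integral>x. x \<partial>D) = (\<integral>s. (\<Sum>i<n. \<Sum>k<m. s (i, k)) / n \<partial>?B)"
    using n_pos by (simp add: field_simps)
  also have "\<dots> \<le> (\<integral>s. (\<Sum>j<m. distortion n m \<sigma> j s) \<partial>?B)"
  proof (rule integral_mono_AE)
    show "integrable ?B (\<lambda>s. (\<Sum>i<n. \<Sum>k<m. s (i, k)) / n)"
      using integrable_sample by (intro integrable_divide_zero Bochner_Integration.integrable_sum) auto
    show "integrable ?B (\<lambda>s. \<Sum>j<m. distortion n m \<sigma> j s)"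
      using integrable_distortion by (intro Bochner_Integration.integrable_sum) auto
    show "AE s in ?B. (\<Sum>i<n. \<Sum>k<m. s (i, k)) / n \<le> (\<Sum>j<m. distortion n m \<sigma> j s)"
      using AE_samples_in_unit by (rule eventually_mono) (rule sum_samples_le_sum_distortion[OF _ profile])
  qed
  also have "\<dots> = (\<Sum>j<m. expected_dist D n m \<sigma> j)"
    by (simp add: Bochner_Integration.integral_sum integrable_distortion expected_dist_def)
  also have "\<dots> \<le> (\<Sum>j<m. Max (expected_dist D n m \<sigma> ` {..<m}))"
    by (intro sum_mono Max_ge) auto
  finally show ?thesis
    using m_pos by simp
qed

lemma prob_mu_hat_close:
  assumes "0 < T" "0 \<le> e"
  shows "1 - 2 * real m * exp (- 2 * real T * e\<^sup>2) \<le> measure (sample_measure D n m T)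
           {\<omega> \<in> space (sample_measure D n m T).
              \<forall>j\<in>{..<m}. \<bar>mu_hat n m \<sigma> T j \<omega> - expected_dist D n m \<sigma> j\<bar> < e}"
  using hoeffding_PiM_uniform[OF B.prob_space_axioms finite_lessThan borel_measurable_distortion
      AE_distortion_in_unit assms] assms(1)
  by (simp add: mu_hat_def expected_dist_def sample_measure_def)

lemma mu_hat_maximizer_nearly_optimal:
  assumes close: "\<forall>k\<in>{..<m}. \<bar>mu_hat n m \<sigma> T k \<omega> - expected_dist D n m \<sigma> k\<bar> < (\<integral>x. x \<partial>D) * \<epsilon> / 2"
    and "0 \<le> \<epsilon>" and "j < m" and maximal: "\<forall>k<m. mu_hat n m \<sigma> T k \<omega> \<le> mu_hat n m \<sigma> T j \<omega>"
  shows "(1 - \<epsilon>) * Max (expected_dist D n m \<sigma> ` {..<m}) \<le> expected_dist D n m \<sigma> j"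
proof -
  let ?E = "expected_dist D n m \<sigma>"
  have "Max (?E ` {..<m}) - 2 * ((\<integral>x. x \<partial>D) * \<epsilon> / 2) < ?E j"
    using close maximal \<open>j < m\<close>
    by (intro maximizer_of_estimates_nearly_optimal[where g="\<lambda>k. mu_hat n m \<sigma> T k \<omega>"]) auto
  moreover have "\<epsilon> * (\<integral>x. x \<partial>D) \<le> \<epsilon> * Max (?E ` {..<m})"
    using mean_le_Max_expected_dist \<open>0 \<le> \<epsilon>\<close> by (rule mult_left_mono)
  ultimately show ?thesis
    by (simp add: algebra_simps)
qed

lemma prob_sampled_winner_nearly_optimal:
  assumes "0 < T" "0 \<le> \<epsilon>"
  shows "1 - 2 * real m * exp (- real T * ((\<integral>x. x \<partial>D) * \<epsilon>)\<^sup>2 / 2) \<le> measure (sample_measure D n m T)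
           {\<omega> \<in> space (sample_measure D n m T).
              \<forall>j<m. (\<forall>k<m. mu_hat n m \<sigma> T k \<omega> \<le> mu_hat n m \<sigma> T j \<omega>) \<longrightarrow>
                (1 - \<epsilon>) * Max (expected_dist D n m \<sigma> ` {..<m}) \<le> expected_dist D n m \<sigma> j}"
    (is "_ \<le> measure ?S ?winner_good")
proof -
  define e where "e = (\<integral>x. x \<partial>D) * \<epsilon> / 2"
  interpret S: prob_space ?S
    unfolding sample_measure_def by (intro prob_space_PiM B.prob_space_axioms)
  have "0 \<le> e"
    using mean_pos \<open>0 \<le> \<epsilon>\<close> by (simp add: e_def)
  have "- real T * ((\<integral>x. x \<partial>D) * \<epsilon>)\<^sup>2 / 2 = - 2 * real T * e\<^sup>2"
    by (simp add: e_def power2_eq_square)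
  then have "1 - 2 * real m * exp (- real T * ((\<integral>x. x \<partial>D) * \<epsilon>)\<^sup>2 / 2) \<le> measure ?S
      {\<omega> \<in> space ?S. \<forall>j\<in>{..<m}. \<bar>mu_hat n m \<sigma> T j \<omega> - expected_dist D n m \<sigma> j\<bar> < e}"
    using prob_mu_hat_close[OF \<open>0 < T\<close> \<open>0 \<le> e\<close>] by (simp only:)
  also have "\<dots> \<le> measure ?S ?winner_good"
  proof (rule S.finite_measure_mono)
    show "?winner_good \<in> sets ?S"
      using borel_measurable_mu_hat by (rule sets_Collect_maximizer_imp)
  qed (use mu_hat_maximizer_nearly_optimal \<open>0 \<le> \<epsilon>\<close> in \<open>auto simp: e_def\<close>)
  finally show ?thesis .
qed

end

theorem theorem10:
  fixes D :: "real measure" and n m T :: nat and \<sigma> :: "nat \<Rightarrow> nat \<Rightarrow> nat"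
    and \<epsilon> \<delta> \<mu> :: real
  assumes "prob_space D" and "sets D = sets borel"
    and "AE x in D. 0 < x \<and> x \<le> 1"
    and "\<mu> = (\<integral>x. x \<partial>D)"
    and "n \<ge> 1" and "m \<ge> 1"
    and "is_profile n m \<sigma>"
    and "\<epsilon> > 0" and "\<delta> > 0"
    and "T = nat \<lceil>2 * ln (2 * real m / \<delta>) / (\<mu>^2 * \<epsilon>^2)\<rceil>"
  shows "measure (sample_measure D n m T)
           {\<omega> \<in> space (sample_measure D n m T).
              \<forall>j<m. (\<forall>k<m. mu_hat n m \<sigma> T k \<omega> \<le> mu_hat n m \<sigma> T j \<omega>) \<longrightarrow>
                 expected_dist D n m \<sigma> j \<ge>
                   (1 - \<epsilon>) * Max ((\<lambda>k. expected_dist D n m \<sigma> k) ` {..<m})}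
         \<ge> 1 - \<delta>"
proof (cases "1 \<le> \<delta>")
  case True
  then show ?thesis
    by (meson diff_le_0_iff_le measure_nonneg order_trans)
next
  case False
  have "sampling_model D n m \<sigma>"
    using assms(1-3,5-7) by (simp add: sampling_model_def)
  then interpret sampling_model D n m \<sigma> .
  have "0 < \<mu>\<^sup>2 * \<epsilon>\<^sup>2"
    using mean_pos assms(4,8) by simp
  moreover have "\<delta> < 1"
    using False by simp
  ultimately have T: "0 < T" "2 * real m * exp (- real T * (\<mu>\<^sup>2 * \<epsilon>\<^sup>2) / 2) \<le> \<delta>"
    using sample_size_bound[OF _ assms(9) _ m_pos assms(10)] by auto
  then show ?thesis
    using prob_sampled_winner_nearly_optimal[OF T(1) less_imp_le[OF assms(8)]]
    unfolding assms(4)[symmetric] power_mult_distrib by linarith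
qed

end
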